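(* Let $p$ be a prime and let $a,b$ be integers with $0<a,b<p$. If $\bigl(p-(a^{-1}b)_p\bigr)\bigl(p-(ab^{-1})_p\bigr)=2p+1$, then $S^G_{a,b}$ is generated by 5 invariants, i.e. $|\mathrm{inv}_{a,b}|=5$ (equivalently, $\operatorname{codim}\ker\varphi_{a,b}=3$).
   Context: Let $S=\mathbb{C}[x_1,x_2]$ with its standard grading, $\zeta=e^{2\pi i/p}$ and $G=\mathbb{Z}/p\mathbb{Z}=\langle\zeta\rangle$. For integers $a,b$, $G$ acts on $S$ by the $\mathbb{C}$-algebra automorphisms determined by $x_1\mapsto\zeta^a x_1$, $x_2\mapsto \zeta^b x_2$; $S^G_{a,b}$ denotes the ring of invariants, spanned by the invariant monomials $x_1^cx_2^d$, i.e. those with $ac+bd\equiv 0\pmod p$. $\mathrm{inv}_{a,b}$ denotes the minimal set of monomial generators of $S^G_{a,b}$ as a $\mathbb{C}$-algebra: the nonconstant invariant monomials that are not a product of two nonconstant invariant monomials. Writing $\mathrm{inv}_{a,b}=\{z_0,\dots,z_n\}$ in lexicographic order with $x_1>x_2$, let $R=\mathbb{C}[y_0,\dots,y_n]$ with $\deg y_i=\deg z_i$ and $\varphi_{a,b}:R\to S^G_{a,b}$ the $\mathbb{C}$-algebra map $y_i\mapsto z_i$. For an integer $c$, $c_p$ is the unique integer $0\le c_p<p$ congruent to $c$ mod $p$, and for $c$ not divisible by $p$, $c^{-1}$ is the unique integer $0<c^{-1}<p$ with $cc^{-1}\equiv1\pmod p$. *)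

theory Defs
  imports "HOL-Number_Theory.Number_Theory"
begin

text \<open>Monomials x1^c x2^d of S = C[x1,x2] are represented by exponent pairs (c,d).
  The monomial (c,d) is G-invariant for the action x1 -> zeta^a x1, x2 -> zeta^b x2
  iff a c + b d = 0 mod p.\<close>

definition invariant_mon :: "nat \<Rightarrow> int \<Rightarrow> int \<Rightarrow> nat \<times> nat \<Rightarrow> bool" where
  "invariant_mon p a b m \<longleftrightarrow> [a * int (fst m) + b * int (snd m) = 0] (mod int p)"

definition nonconst_mon :: "nat \<times> nat \<Rightarrow> bool" where
  "nonconst_mon m \<longleftrightarrow> m \<noteq> (0, 0)"

text \<open>Product of monomials = sum of exponent vectors.\<close>
definition inv_gens :: "nat \<Rightarrow> int \<Rightarrow> int \<Rightarrow> (nat \<times> nat) set" where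
  "inv_gens p a b = {m. nonconst_mon m \<and> invariant_mon p a b m \<and>
     \<not> (\<exists>u v. nonconst_mon u \<and> invariant_mon p a b u \<and>
               nonconst_mon v \<and> invariant_mon p a b v \<and>
               m = (fst u + fst v, snd u + snd v))}"

definition inv_mod :: "int \<Rightarrow> int \<Rightarrow> int" where
  "inv_mod p c = (THE i. 0 < i \<and> i < p \<and> [c * i = 1] (mod p))"

end

theory Submission
  imports Defs
begin

(*
  Put n = p - (a^{-1} b)_p and m = p - (a b^{-1})_p.  Multiplying the invariance condition
  a c + b d = 0 (mod p) by a^{-1} turns it into c = n d (mod p).  If n m = 2p + 1, then for an
  invariant exponent (c, d) with 0 < c < n and 0 < d < m both n d - c and m c - d are multiples
  of p strictly between 0 and 2p, hence both equal p, which forces (c, d) = ((n+1)/2, (m+1)/2).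
  So every nonzero invariant exponent dominates one of (p,0), (n,1), ((n+1)/2, (m+1)/2), (1,m),
  (0,p); these five are pairwise incomparable, hence exactly the indecomposable ones.
*)

lemma inv_mod_cong:
  fixes p x :: int
  assumes "1 < p" and "coprime x p"
  shows "[x * inv_mod p x = 1] (mod p)"
proof -
  obtain y where "[x * y = 1] (mod p)"
    using cong_solve_coprime_int assms(2) by blast
  then have y: "[x * (y mod p) = 1] (mod p)"
    by (simp add: cong_def mod_mult_right_eq)
  have "y mod p \<noteq> 0"
  proof
    assume "y mod p = 0"
    then have "p dvd 1" using y by (simp add: cong_iff_dvd_diff)
    then show False using assms(1) by simp
  qed
  then have "0 < y mod p \<and> y mod p < p \<and> [x * (y mod p) = 1] (mod p)"
    using y assms(1) pos_mod_sign[of p y] pos_mod_bound[of p y] by linarith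
  moreover have "i = j" if "0 < i \<and> i < p \<and> [x * i = 1] (mod p)"
    and "0 < j \<and> j < p \<and> [x * j = 1] (mod p)" for i j
  proof -
    have "[x * i = x * j] (mod p)" using that cong_sym cong_trans by blast
    then have "[i = j] (mod p)" using cong_mult_lcancel assms(2) by blast
    then show ?thesis using that cong_less_imp_eq_int[of i p j] by linarith
  qed
  ultimately have "\<exists>!i. 0 < i \<and> i < p \<and> [x * i = 1] (mod p)" by blast
  then have "0 < inv_mod p x \<and> inv_mod p x < p \<and> [x * inv_mod p x = 1] (mod p)"
    unfolding inv_mod_def by (rule theI')
  then show ?thesis by blast
qed

lemma invariant_mon_cong:
  assumes "[a = a'] (mod int p)" and "[b = b'] (mod int p)"
  shows "invariant_mon p a b = invariant_mon p a' b'"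
proof
  fix m :: "nat \<times> nat"
  have h: "[a * int (fst m) + b * int (snd m) = a' * int (fst m) + b' * int (snd m)] (mod int p)"
    using assms by (intro cong_add cong_scalar_right)
  show "invariant_mon p a b m = invariant_mon p a' b' m"
    unfolding invariant_mon_def using cong_trans[OF cong_sym[OF h]] cong_trans[OF h] by blast
qed

lemma invariant_mon_mult_coprime:
  assumes "coprime k (int p)"
  shows "invariant_mon p (k * a) (k * b) = invariant_mon p a b"
proof
  fix m :: "nat \<times> nat"
  have "k * a * int (fst m) + k * b * int (snd m) = k * (a * int (fst m) + b * int (snd m))"
    by (simp add: algebra_simps)
  then show "invariant_mon p (k * a) (k * b) m = invariant_mon p a b m"
    unfolding invariant_mon_def using cong_mult_lcancel[OF assms, of _ 0] by simp
qed

lemma invariant_mon_one_neg_iff: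
  "invariant_mon p 1 (- k) x \<longleftrightarrow> [int (fst x) = k * int (snd x)] (mod int p)"
  unfolding invariant_mon_def by (simp add: cong_iff_dvd_diff cong_0_iff)

lemma invariant_mon_normal_form:
  assumes "1 < p" and "coprime a (int p)"
  shows "invariant_mon p a b = invariant_mon p 1 (- (int p - (inv_mod (int p) a * b) mod int p))"
proof -
  let ?i = "inv_mod (int p) a"
  have "[a * ?i = 1] (mod int p)" using inv_mod_cong assms by simp
  then have "[?i * a = 1] (mod int p)" and "coprime ?i (int p)"
    by (auto simp: mult.commute coprime_iff_invertible_int)
  then have "invariant_mon p a b = invariant_mon p (?i * a) (?i * b)"
    by (simp add: invariant_mon_mult_coprime)
  also have "\<dots> = invariant_mon p 1 (- (int p - (?i * b) mod int p))"
    using \<open>[?i * a = 1] (mod int p)\<close>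
    by (intro invariant_mon_cong) (simp_all add: cong_def mod_diff_left_eq)
  finally show ?thesis .
qed

lemma invariant_mon_diff:
  assumes "invariant_mon p a b (c, d)" and "invariant_mon p a b (c', d')"
    and "c' \<le> c" and "d' \<le> d"
  shows "invariant_mon p a b (c - c', d - d')"
proof -
  have "[(a * int c + b * int d) - (a * int c' + b * int d') = 0 - 0] (mod int p)"
    using assms(1,2) unfolding invariant_mon_def by (intro cong_diff) auto
  then show ?thesis
    using assms(3,4) unfolding invariant_mon_def by (simp add: algebra_simps)
qed

lemma inv_gens_eqI:
  assumes gens: "\<And>g. g \<in> G \<Longrightarrow> nonconst_mon g \<and> invariant_mon p a b g"
    and antichain: "\<And>g g'. g \<in> G \<Longrightarrow> g' \<in> G \<Longrightarrow>
                      fst g' \<le> fst g \<Longrightarrow> snd g' \<le> snd g \<Longrightarrow> g' = g"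
    and cover: "\<And>x. nonconst_mon x \<Longrightarrow> invariant_mon p a b x \<Longrightarrow>
                  \<exists>g\<in>G. fst g \<le> fst x \<and> snd g \<le> snd x"
  shows "inv_gens p a b = G"
proof (intro equalityI subsetI)
  fix x assume "x \<in> inv_gens p a b"
  then have x: "nonconst_mon x" "invariant_mon p a b x"
    and indec: "\<not> (\<exists>u v. nonconst_mon u \<and> invariant_mon p a b u \<and>
                  nonconst_mon v \<and> invariant_mon p a b v \<and> x = (fst u + fst v, snd u + snd v))"
    unfolding inv_gens_def by auto
  obtain g where g: "g \<in> G" "fst g \<le> fst x" "snd g \<le> snd x"
    using cover x by blast
  define v where "v = (fst x - fst g, snd x - snd g)"
  have "invariant_mon p a b v"
    unfolding v_def using invariant_mon_diff[of p a b "fst x" "snd x" "fst g" "snd g"] x g gens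
    by simp
  moreover have "x = (fst g + fst v, snd g + snd v)" using g unfolding v_def by auto
  ultimately have "\<not> nonconst_mon v" using indec gens g(1) by blast
  then have "x = g" using g unfolding v_def nonconst_mon_def by (simp add: prod_eq_iff)
  then show "x \<in> G" using g by simp
next
  fix x assume xG: "x \<in> G"
  have "\<not> nonconst_mon v" if u: "nonconst_mon u" "invariant_mon p a b u"
    and x_sum: "x = (fst u + fst v, snd u + snd v)" for u v
  proof -
    obtain g where g: "g \<in> G" "fst g \<le> fst u" "snd g \<le> snd u"
      using cover u by blast
    have "fst g \<le> fst x" "snd g \<le> snd x" using g x_sum by auto
    then have "g = x" using antichain[OF xG g(1)] by simp
    then show ?thesis using g x_sum by (simp add: nonconst_mon_def prod_eq_iff)
  qed
  then show "x \<in> inv_gens p a b"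
    using xG gens unfolding inv_gens_def by blast
qed

lemma dvd_eq_if_pos_less_double:
  fixes p x :: int
  assumes "p dvd x" and "0 < x" and "x < 2 * p"
  shows "x = p"
proof -
  obtain k where x: "x = p * k" using assms(1) by blast
  have "0 < p" using assms(2,3) by linarith
  have "0 < k" using \<open>0 < p\<close> assms(2) unfolding x by (simp add: zero_less_mult_iff)
  moreover have "k < 2"
    using \<open>0 < p\<close> assms(3) unfolding x by (simp add: mult.commute[of 2 p])
  ultimately show ?thesis unfolding x by simp
qed

lemma box_lattice_point_eq:
  fixes p n m c d :: int
  assumes nm: "n * m = 2 * p + 1" and c: "1 \<le> c" "c < n" and d: "1 \<le> d" "d < m"
    and "p dvd n * d - c"
  shows "n * d - c = p"
proof (rule dvd_eq_if_pos_less_double)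
  have "n * 1 \<le> n * d" using c d by (intro mult_left_mono) auto
  then show "0 < n * d - c" using c by linarith
  have "n * d \<le> n * (m - 1)" using c d by (intro mult_left_mono) auto
  then have "n * d \<le> 2 * p + 1 - n" using nm by (simp add: algebra_simps)
  then show "n * d - c < 2 * p" using c by linarith
qed fact

lemma box_lattice_point_center:
  fixes p n m c d :: int
  assumes nm: "n * m = 2 * p + 1" and c: "1 \<le> c" "c < n" and d: "1 \<le> d" "d < m"
    and dvd: "p dvd n * d - c"
  shows "2 * c = n + 1" and "2 * d = m + 1"
proof -
  have e1: "n * d - c = p" using box_lattice_point_eq[OF assms] .
  have "m * c - d = 2 * p * d - m * (n * d - c)" using nm by (simp add: algebra_simps)
  then have "p dvd m * c - d" unfolding e1 by simp
  then have e2: "m * c - d = p"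
    using box_lattice_point_eq[of m n p d c] nm c d by (simp add: mult.commute)
  have "2 * 2 \<le> n * m" using c d by (intro mult_mono) auto
  then have "0 < p" using nm by simp
  have "p * n = p * (2 * c - 1)"
  proof -
    have "p * n = n * (m * c - d)" using e2 by simp
    also have "\<dots> = (2 * p + 1) * c - (p + c)" using nm e1 by (simp add: algebra_simps)
    finally show ?thesis by (simp add: algebra_simps)
  qed
  then show "2 * c = n + 1" using \<open>0 < p\<close> by simp
  have "p * m = p * (2 * d - 1)"
  proof -
    have "p * m = m * (n * d - c)" using e1 by simp
    also have "\<dots> = (2 * p + 1) * d - (p + d)" using nm e2 by (simp add: algebra_simps)
    finally show ?thesis by (simp add: algebra_simps)
  qed
  then show "2 * d = m + 1" using \<open>0 < p\<close> by simp
qed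

context
  fixes p n m :: nat
  assumes factorization: "n * m = 2 * p + 1" and n_le: "n \<le> p" and m_le: "m \<le> p"
begin

lemma factorization_int: "int n * int m = 2 * int p + 1"
  using arg_cong[OF factorization, of int] by simp

lemma factors_less: "n < p" "m < p"
proof -
  have "1 < p"
  proof (rule ccontr)
    assume "\<not> 1 < p"
    then have "n * m \<le> 1 * 1" using n_le m_le by (intro mult_mono) auto
    then show False using factorization n_le \<open>\<not> 1 < p\<close> by simp
  qed
  have "\<not> p dvd 2 * p + 1"
  proof
    assume "p dvd 2 * p + 1"
    then have "p dvd 1" using dvd_add_right_iff[of p "2 * p" 1] by simp
    then show False using \<open>1 < p\<close> by simp
  qed
  then have "n \<noteq> p" and "m \<noteq> p"
    using factorization by (metis dvd_triv_left dvd_triv_right)+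
  then show "n < p" "m < p" using n_le m_le by simp_all
qed

lemma factors_odd: "odd n" "odd m"
proof -
  have "odd (n * m)" using factorization by simp
  then show "odd n" "odd m" by simp_all
qed

lemma three_le_factors: "3 \<le> n" "3 \<le> m"
proof -
  have "n \<noteq> 1" and "m \<noteq> 1" using factorization factors_less by auto
  then show "3 \<le> n" "3 \<le> m" using factors_odd by presburger+
qed

lemma center_bounds:
  "1 < (n + 1) div 2" "(n + 1) div 2 < n" "1 < (m + 1) div 2" "(m + 1) div 2 < m"
  using three_le_factors by simp_all

lemma center_cong: "[int ((n + 1) div 2) = int n * int ((m + 1) div 2)] (mod int p)"
proof -
  define h where "h = (n + 1) div 2"
  define k where "k = (m + 1) div 2"
  have "2 * h = n + 1" "2 * k = m + 1"
    using factors_odd unfolding h_def k_def by presburger+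
  then have hk: "2 * int h = int n + 1" "2 * int k = int m + 1" by linarith+
  have "2 * (int n * int k - int h) = int n * (2 * int k) - 2 * int h"
    by (simp add: algebra_simps)
  also have "\<dots> = int n * int m - 1" using hk by (simp add: algebra_simps)
  also have "\<dots> = 2 * int p" using factorization_int by simp
  finally have "int h - int n * int k = - int p" by simp
  then show ?thesis
    unfolding h_def [symmetric] k_def [symmetric] by (simp add: cong_iff_dvd_diff)
qed

definition lattice_basis :: "(nat \<times> nat) set" where
  "lattice_basis = {(p, 0), (n, 1), ((n + 1) div 2, (m + 1) div 2), (1, m), (0, p)}"

lemma lattice_basis_antichain:
  assumes "g \<in> lattice_basis" and "g' \<in> lattice_basis"
    and "fst g' \<le> fst g" and "snd g' \<le> snd g"
  shows "g' = g"
  using assms center_bounds factors_less unfolding lattice_basis_def by auto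

lemma card_lattice_basis: "card lattice_basis = 5"
  using center_bounds factors_less unfolding lattice_basis_def by auto

lemma lattice_basis_cong:
  assumes "g \<in> lattice_basis"
  shows "[int (fst g) = int n * int (snd g)] (mod int p)"
proof -
  have "[int 1 = int n * int m] (mod int p)"
    by (simp add: factorization_int cong_iff_dvd_diff)
  then show ?thesis
    using assms center_cong unfolding lattice_basis_def by (auto simp: cong_iff_dvd_diff)
qed

lemma lattice_cover:
  assumes nonzero: "(c, d) \<noteq> (0, 0)" and cong: "[int c = int n * int d] (mod int p)"
  shows "\<exists>g\<in>lattice_basis. fst g \<le> c \<and> snd g \<le> d"
proof -
  have dvd: "int p dvd int n * int d - int c"
    using cong by (simp add: cong_iff_dvd_diff dvd_diff_commute)
  have "p \<le> c" if "d = 0"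
  proof -
    have "p dvd c" using dvd that by simp
    then show ?thesis using nonzero that by (simp add: dvd_imp_le)
  qed
  moreover have "p \<le> d" if "c = 0"
  proof -
    have "int p dvd int m * (int n * int d)" using dvd that by simp
    then have "int p dvd 2 * int p * int d + int d"
      using factorization_int by (simp add: algebra_simps)
    then have "p dvd d" by (simp add: dvd_add_right_iff)
    then show ?thesis using nonzero that by (simp add: dvd_imp_le)
  qed
  moreover have "c = (n + 1) div 2 \<and> d = (m + 1) div 2"
    if "0 < c" "c < n" "0 < d" "d < m"
  proof -
    have "2 * int c = int n + 1" "2 * int d = int m + 1"
      using box_lattice_point_center[OF factorization_int, of "int c" "int d"] that dvd by simp_all
    then have "2 * c = n + 1" "2 * d = m + 1" by linarith+
    then show ?thesis by presburger
  qed
  ultimately show ?thesis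
    unfolding lattice_basis_def by (cases "c < n"; cases "d < m") auto
qed

lemma inv_gens_eq_lattice_basis: "inv_gens p 1 (- int n) = lattice_basis"
proof (rule inv_gens_eqI)
  fix g assume "g \<in> lattice_basis"
  then show "nonconst_mon g \<and> invariant_mon p 1 (- int n) g"
    using lattice_basis_cong[of g] factors_less center_bounds
    unfolding lattice_basis_def nonconst_mon_def by (auto simp: invariant_mon_one_neg_iff)
next
  fix x assume "nonconst_mon x" and "invariant_mon p 1 (- int n) x"
  then show "\<exists>g\<in>lattice_basis. fst g \<le> fst x \<and> snd g \<le> snd x"
    using lattice_cover[of "fst x" "snd x"]
    by (simp add: nonconst_mon_def invariant_mon_one_neg_iff)
qed (rule lattice_basis_antichain)

end

theorem proposition1p3:
  fixes p :: nat and a b :: int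
  assumes "prime p" and "0 < a" and "a < int p" and "0 < b" and "b < int p"
    and "(int p - (inv_mod (int p) a * b) mod int p) *
         (int p - (a * inv_mod (int p) b) mod int p) = 2 * int p + 1"
  shows "card (inv_gens p a b) = 5"
proof -
  define n where "n = nat (int p - (inv_mod (int p) a * b) mod int p)"
  define m where "m = nat (int p - (a * inv_mod (int p) b) mod int p)"
  \<comment> \<open>Only n m = 2p + 1 and n, m \<le> p are used below.\<close>
  have "0 < p" using assms(1) prime_gt_0_nat by blast
  then have n: "int n = int p - (inv_mod (int p) a * b) mod int p"
    and m: "int m = int p - (a * inv_mod (int p) b) mod int p"
    unfolding n_def m_def by (simp_all add: less_imp_le)
  have "int (n * m) = int (2 * p + 1)" using assms(6) unfolding n [symmetric] m [symmetric] by simp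
  then have factorization: "n * m = 2 * p + 1" by (simp only: of_nat_eq_iff)
  have bounds: "n \<le> p" "m \<le> p"
    using n m pos_mod_sign[of "int p" "inv_mod (int p) a * b"]
      pos_mod_sign[of "int p" "a * inv_mod (int p) b"] \<open>0 < p\<close> by linarith+
  have "\<not> int p dvd a" using assms(2,3) zdvd_imp_le by fastforce
  then have "coprime a (int p)"
    using prime_imp_coprime[of "int p" a] assms(1) by (simp add: coprime_commute)
  then have "inv_gens p a b = inv_gens p 1 (- int n)"
    using invariant_mon_normal_form[of p a b] prime_gt_1_nat[OF assms(1)]
    unfolding inv_gens_def n by simp
  also have "\<dots> = lattice_basis p n m"
    by (rule inv_gens_eq_lattice_basis[OF factorization bounds])
  finally show ?thesis using card_lattice_basis[OF factorization bounds] by simp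
qed

end
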